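(* Let $p\ge3$ and let $n_1\ge n_2\ge\dots\ge n_p\ge1$ be positive integers such that $n_1+\sum_{i=2}^p\sigma_in_i=0$ for some $\sigma_2,\dots,\sigma_p\in\{-1,0,1\}$. Then for every $0<\alpha<1$, $$\sum_{i=2}^pn_i^\alpha-n_1^\alpha\ge(2-2^\alpha)\sum_{i=3}^pn_i^\alpha.$$ *)

theory Defs
  imports Complex_Main
begin

end

theory Submission
  imports Defs
begin

text \<open>By concavity, adding a summand \<open>m\<close> no larger than \<open>t\<close> increases \<open>t powr \<alpha>\<close> by at most
  \<open>(2 powr \<alpha> - 1) * m powr \<alpha>\<close>, the increment at \<open>t = m\<close>. Iterating this along \<open>n\<^sub>2 \<ge> n\<^sub>3 \<ge> \<dots>\<close>
  bounds \<open>(n\<^sub>2 + \<dots> + n\<^sub>p) powr \<alpha>\<close>, and the sign condition gives \<open>n\<^sub>1 \<le> n\<^sub>2 + \<dots> + n\<^sub>p\<close>.\<close>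

lemma powr_add_le_of_le:
  fixes t m \<alpha> :: real
  assumes "0 < m" "m \<le> t" "0 \<le> \<alpha>" "\<alpha> \<le> 1"
  shows "(t + m) powr \<alpha> \<le> t powr \<alpha> + (2 powr \<alpha> - 1) * m powr \<alpha>"
proof -
  let ?h = "\<lambda>x. (x + m) powr \<alpha> - x powr \<alpha>"
  have "?h t \<le> ?h m"
  proof (rule DERIV_nonpos_imp_nonincreasing[OF \<open>m \<le> t\<close>])
    fix x assume "m \<le> x" "x \<le> t"
    with assms have "0 < x" by simp
    have "((\<lambda>x. (x + m) powr \<alpha>) has_real_derivative \<alpha> * (x + m) powr (\<alpha> - 1)) (at x)"
      using \<open>0 < x\<close> \<open>0 < m\<close> by (auto intro!: derivative_eq_intros)
    moreover have "((\<lambda>x. x powr \<alpha>) has_real_derivative \<alpha> * x powr (\<alpha> - 1)) (at x)"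
      using has_real_derivative_powr[OF \<open>0 < x\<close>] .
    moreover have "(x + m) powr (\<alpha> - 1) \<le> x powr (\<alpha> - 1)"
      using powr_mono2'[of "\<alpha> - 1" x "x + m"] \<open>0 < x\<close> assms by simp
    then have "\<alpha> * (x + m) powr (\<alpha> - 1) - \<alpha> * x powr (\<alpha> - 1) \<le> 0"
      using assms by (simp add: mult_left_mono)
    ultimately show "\<exists>y. DERIV ?h x :> y \<and> y \<le> 0"
      using DERIV_diff by blast
  qed
  moreover have "(m + m) powr \<alpha> = 2 powr \<alpha> * m powr \<alpha>"
    using assms by (simp add: powr_mult[symmetric])
  ultimately show ?thesis by (simp add: algebra_simps)
qed

lemma powr_sum_le_first_plus:
  fixes x :: "nat \<Rightarrow> real" and \<alpha> :: real
  assumes "a \<le> b" "0 \<le> \<alpha>" "\<alpha> \<le> 1"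
    and pos: "\<And>i. a \<le> i \<Longrightarrow> i \<le> b \<Longrightarrow> 0 < x i"
    and le_first: "\<And>i. a \<le> i \<Longrightarrow> i \<le> b \<Longrightarrow> x i \<le> x a"
  shows "(\<Sum>i=a..b. x i) powr \<alpha> \<le> x a powr \<alpha> + (2 powr \<alpha> - 1) * (\<Sum>i=Suc a..b. x i powr \<alpha>)"
  using assms(1) pos le_first
proof (induction b rule: dec_induct)
  case base
  then show ?case by simp
next
  case (step k)
  have "x (Suc k) \<le> x a" "0 < x (Suc k)"
    using step.prems step.hyps by auto
  moreover have "x a \<le> (\<Sum>i=a..k. x i)"
    using step.prems step.hyps by (intro member_le_sum) (auto intro: less_imp_le)
  ultimately have "((\<Sum>i=a..k. x i) + x (Suc k)) powr \<alpha>
      \<le> (\<Sum>i=a..k. x i) powr \<alpha> + (2 powr \<alpha> - 1) * x (Suc k) powr \<alpha>"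
    using assms by (intro powr_add_le_of_le) auto
  moreover have "(\<Sum>i=a..k. x i) powr \<alpha> \<le> x a powr \<alpha> + (2 powr \<alpha> - 1) * (\<Sum>i=Suc a..k. x i powr \<alpha>)"
    using step by simp
  ultimately show ?case
    using step.hyps by (simp add: algebra_simps)
qed

lemma le_sum_of_signed_sum_eq_zero:
  fixes c :: "'a :: linordered_idom" and y :: "'b \<Rightarrow> 'a"
  assumes "\<And>i. i \<in> A \<Longrightarrow> \<sigma> i \<in> {-1, 0, 1}" "\<And>i. i \<in> A \<Longrightarrow> 0 \<le> y i"
    and "c + (\<Sum>i\<in>A. \<sigma> i * y i) = 0"
  shows "c \<le> (\<Sum>i\<in>A. y i)"
proof -
  have "c = (\<Sum>i\<in>A. - \<sigma> i * y i)"
    using assms(3) by (simp add: sum_negf eq_neg_iff_add_eq_0)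
  also have "\<dots> \<le> (\<Sum>i\<in>A. y i)"
    using assms(1,2) by (intro sum_mono) fastforce
  finally show ?thesis .
qed

theorem lemmaC1:
  fixes p :: nat and n :: "nat \<Rightarrow> nat" and \<sigma> :: "nat \<Rightarrow> int" and \<alpha> :: real
  assumes "p \<ge> 3"
    and "\<And>i j. 1 \<le> i \<Longrightarrow> i \<le> j \<Longrightarrow> j \<le> p \<Longrightarrow> n j \<le> n i"
    and "\<And>i. 1 \<le> i \<Longrightarrow> i \<le> p \<Longrightarrow> n i \<ge> 1"
    and "\<And>i. 2 \<le> i \<Longrightarrow> i \<le> p \<Longrightarrow> \<sigma> i \<in> {-1, 0, 1}"
    and "int (n 1) + (\<Sum>i=2..p. \<sigma> i * int (n i)) = 0"
    and "0 < \<alpha>" and "\<alpha> < 1"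
  shows "(\<Sum>i=2..p. real (n i) powr \<alpha>) - real (n 1) powr \<alpha>
           \<ge> (2 - 2 powr \<alpha>) * (\<Sum>i=3..p. real (n i) powr \<alpha>)"
proof -
  have "int (n 1) \<le> (\<Sum>i=2..p. int (n i))"
    using assms(4,5) by (intro le_sum_of_signed_sum_eq_zero[where \<sigma> = \<sigma>]) auto
  then have "real (n 1) \<le> (\<Sum>i=2..p. real (n i))"
    by (simp flip: of_nat_sum)
  then have "real (n 1) powr \<alpha> \<le> (\<Sum>i=2..p. real (n i)) powr \<alpha>"
    using assms(6) by (simp add: powr_mono2)
  also have "\<dots> \<le> real (n 2) powr \<alpha> + (2 powr \<alpha> - 1) * (\<Sum>i=3..p. real (n i) powr \<alpha>)"
  proof -
    have "(\<Sum>i=2..p. real (n i)) powr \<alpha>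
        \<le> real (n 2) powr \<alpha> + (2 powr \<alpha> - 1) * (\<Sum>i=Suc 2..p. real (n i) powr \<alpha>)"
      using assms(1,6,7) assms(2)[of 2] assms(3)
      by (intro powr_sum_le_first_plus) (auto simp: Suc_le_eq)
    then show ?thesis by (simp add: numeral_3_eq_3)
  qed
  moreover have "(\<Sum>i=2..p. real (n i) powr \<alpha>) = real (n 2) powr \<alpha> + (\<Sum>i=3..p. real (n i) powr \<alpha>)"
    using assms(1) by (subst sum.atLeast_Suc_atMost) (auto simp: numeral_3_eq_3)
  ultimately show ?thesis by (simp add: algebra_simps)
qed

end
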